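(* Let $N\ge3$ be an integer, $p>(N+2)/(N-2)$, $b>0$, $\lambda>0$, and suppose the problem $u''+\frac{N-1}{r}u'+\lambda u+u^p=0$ on $(0,b)$, $u'(0)=u(b)=0$, has a positive solution $u_0$. Let $\phi$ be the solution of $\phi''+\frac{N-1}{r}\phi'+\lambda\phi=0$ for $r>0$, $\phi(0)=1$, $\phi'(0)=0$. Then $\phi(r)>0$ for all $r\in[0,b]$.
   Context: A positive solution means $u_0(r)>0$ for $r\in[0,b)$. *)

theory Defs
  imports "HOL-Analysis.Analysis"
begin

definition positive_solution ::
  "nat \<Rightarrow> real \<Rightarrow> real \<Rightarrow> real \<Rightarrow> (real \<Rightarrow> real) \<Rightarrow> (real \<Rightarrow> real) \<Rightarrow> (real \<Rightarrow> real) \<Rightarrow> bool"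
where
  "positive_solution N p lam b u du ddu \<longleftrightarrow>
     continuous_on {0..b} u \<and>
     (\<forall>r\<in>{0..<b}. (u has_real_derivative du r) (at r within {0..<b})) \<and>
     continuous_on {0..<b} du \<and>
     (\<forall>r\<in>{0<..<b}. (du has_real_derivative ddu r) (at r)) \<and>
     (\<forall>r\<in>{0<..<b}. ddu r + (real N - 1) / r * du r + lam * u r + u r powr p = 0) \<and>
     du 0 = 0 \<and> u b = 0 \<and>
     (\<forall>r\<in>{0..<b}. u r > 0)"

definition linear_solution ::
  "nat \<Rightarrow> real \<Rightarrow> (real \<Rightarrow> real) \<Rightarrow> (real \<Rightarrow> real) \<Rightarrow> (real \<Rightarrow> real) \<Rightarrow> bool"
where
  "linear_solution N lam phi dphi ddphi \<longleftrightarrow>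
     (\<forall>r\<in>{0..}. (phi has_real_derivative dphi r) (at r within {0..})) \<and>
     continuous_on {0..} dphi \<and>
     (\<forall>r\<in>{0<..}. (dphi has_real_derivative ddphi r) (at r)) \<and>
     (\<forall>r\<in>{0<..}. ddphi r + (real N - 1) / r * dphi r + lam * phi r = 0) \<and>
     phi 0 = 1 \<and> dphi 0 = 0"

end

theory Submission
  imports Defs
begin

text \<open>The weighted Wronskian \<open>W(r) = r^(N-1) (u'(r) \<phi>(r) - u(r) \<phi>'(r))\<close> satisfies
  \<open>W' = -r^(N-1) \<phi> u^p\<close>, so \<open>W(0) = 0\<close> and \<open>W\<close> decreases strictly as long as \<open>\<phi> > 0\<close>.
  At a first zero \<open>c \<le> b\<close> of \<open>\<phi>\<close>, however, \<open>W(c) = -c^(N-1) u(c) \<phi>'(c) \<ge> 0\<close>, because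
  \<open>u(c) \<ge> 0\<close> and \<open>\<phi>'(c) \<le> 0\<close>. As \<open>u'\<close> is only known on \<open>[0,b)\<close>, the value \<open>W(c)\<close> is
  replaced by a limit from the left, which needs the flux \<open>r^(N-1) u'\<close> to be bounded below.\<close>

lemma radial_flux_has_real_derivative:
  fixes dv :: "real \<Rightarrow> real"
  assumes "N \<ge> 1" and "r > 0" and "(dv has_real_derivative D) (at r)"
  shows "((\<lambda>s. s ^ (N - 1) * dv s) has_real_derivative
           r ^ (N - 1) * (D + (real N - 1) / r * dv r)) (at r)"
proof -
  have "((\<lambda>s. s ^ (N - 1) * dv s) has_real_derivative
          real (N - 1) * r ^ (N - 1 - 1) * dv r + r ^ (N - 1) * D) (at r)"
    using assms(3) by (auto intro!: derivative_eq_intros)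
  moreover have "real (N - 1) * r ^ (N - 1 - 1) = r ^ (N - 1) * ((real N - 1) / r)"
  proof (cases "N = 1")
    case False
    then have "N - 1 = Suc (N - 1 - 1)" using assms(1) by simp
    then have "r ^ (N - 1) = r * r ^ (N - 1 - 1)" by (metis power_Suc)
    then show ?thesis using assms by simp
  qed simp
  ultimately show ?thesis by (simp add: algebra_simps)
qed

lemma continuous_on_first_nonpos:
  fixes f :: "real \<Rightarrow> real"
  assumes "continuous_on {a..b} f" and "f a > 0" and "x \<in> {a..b}" and "f x \<le> 0"
  obtains c where "a < c" "c \<le> b" "f c \<le> 0" "\<forall>y\<in>{a..<c}. f y > 0"
proof -
  define S where "S = {y \<in> {a..b}. f y \<le> 0}"
  have "closed S"
    unfolding S_def using assms(1) by (rule continuous_on_closed_Collect_le) auto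
  moreover have "bounded S" unfolding S_def by (rule bounded_subset[of "{a..b}"]) auto
  ultimately have "compact S" by (simp add: compact_eq_bounded_closed)
  moreover have "x \<in> S" using assms(3,4) by (simp add: S_def)
  ultimately obtain c where "c \<in> S" and c_min: "\<forall>y\<in>S. c \<le> y"
    using compact_attains_inf by blast
  then have "a \<le> c" "c \<le> b" "f c \<le> 0" by (auto simp: S_def)
  moreover have "a \<noteq> c" using \<open>f c \<le> 0\<close> assms(2) by auto
  moreover have "\<forall>y\<in>{a..<c}. f y > 0"
  proof
    fix y assume y: "y \<in> {a..<c}"
    show "f y > 0"
    proof (rule ccontr)
      assume "\<not> f y > 0"
      then have "y \<in> S" using y \<open>c \<le> b\<close> by (auto simp: S_def)
      then show False using c_min y by fastforce
    qed
  qed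
  ultimately show ?thesis by (intro that[of c]) auto
qed

lemma DERIV_nonpos_at_left_crossing:
  fixes f :: "real \<Rightarrow> real"
  assumes "DERIV f x :> D" and "f x \<le> 0" and "a < x" and "\<forall>y\<in>{a<..<x}. f y > 0"
  shows "D \<le> 0"
proof (rule ccontr)
  assume "\<not> D \<le> 0"
  then obtain d where "d > 0" and d: "\<forall>h>0. h < d \<longrightarrow> f (x - h) < f x"
    using DERIV_pos_inc_left[OF assms(1)] by auto
  define h where "h = min d (x - a) / 2"
  have "0 < h" "h < d" "h < x - a" using \<open>d > 0\<close> assms(3) by (auto simp: h_def)
  then have "f (x - h) < f x" using d by auto
  moreover have "f (x - h) > 0" using assms(4) \<open>0 < h\<close> \<open>h < x - a\<close> by auto
  ultimately show False using assms(2) by linarith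
qed

lemma DERIV_lower_bound_by_slope:
  fixes f f' :: "real \<Rightarrow> real"
  assumes "a \<le> x" and "continuous_on {a..x} f"
    and "\<And>s. a < s \<Longrightarrow> s < x \<Longrightarrow> (f has_real_derivative f' s) (at s)"
    and "\<And>s. a < s \<Longrightarrow> s < x \<Longrightarrow> - K \<le> f' s"
  shows "f a - K * (x - a) \<le> f x"
proof -
  have "f a + K * a \<le> f x + K * x"
  proof (rule DERIV_nonneg_imp_increasing_open[where f = "\<lambda>s. f s + K * s"])
    fix s assume "a < s" "s < x"
    then show "\<exists>y. ((\<lambda>s. f s + K * s) has_real_derivative y) (at s) \<and> 0 \<le> y"
      using assms(3,4) by (force intro!: derivative_eq_intros)
  qed (use assms(1,2) in \<open>auto intro!: continuous_intros\<close>)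
  then show ?thesis by (simp add: algebra_simps)
qed

lemma positive_solution_DERIV:
  assumes "positive_solution N p lam b u du ddu" and "0 < r" "r < b"
  shows "(u has_real_derivative du r) (at r)"
proof -
  have "(u has_real_derivative du r) (at r within {0..<b})"
    using assms unfolding positive_solution_def by auto
  moreover have "at r within {0..<b} = at r"
    using assms(2,3) by (intro at_within_interior) simp
  ultimately show ?thesis by simp
qed

lemma linear_solution_DERIV:
  assumes "linear_solution N lam phi dphi ddphi" and "0 < r"
  shows "(phi has_real_derivative dphi r) (at r)"
proof -
  have "(phi has_real_derivative dphi r) (at r within {0..})"
    using assms unfolding linear_solution_def by auto
  moreover have "at r within {0..} = at r"
    using assms(2) by (intro at_within_interior) simp
  ultimately show ?thesis by simp
qed

lemma linear_solution_continuous_on: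
  assumes "linear_solution N lam phi dphi ddphi"
  shows "continuous_on {0..} phi"
  using assms unfolding linear_solution_def by (metis DERIV_continuous_on)

lemma positive_solution_flux_has_real_derivative:
  assumes "positive_solution N p lam b u du ddu" and "N \<ge> 1" and "0 < r" "r < b"
  shows "((\<lambda>s. s ^ (N - 1) * du s) has_real_derivative
           - (r ^ (N - 1) * (lam * u r + u r powr p))) (at r)"
proof -
  have ddu: "(du has_real_derivative ddu r) (at r)"
    and ode: "ddu r + (real N - 1) / r * du r + lam * u r + u r powr p = 0"
    using assms unfolding positive_solution_def by auto
  have "ddu r + (real N - 1) / r * du r = - (lam * u r + u r powr p)"
    using ode by linarith
  then show ?thesis
    using radial_flux_has_real_derivative[OF assms(2,3) ddu] by (simp only: mult_minus_right)
qed

lemma positive_solution_flux_bounded_below: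
  assumes sol: "positive_solution N p lam b u du ddu" and "N \<ge> 1" and "0 \<le> p" and "0 < b"
  obtains B where "B \<ge> 0" and "\<forall>r\<in>{0..<b}. - B \<le> r ^ (N - 1) * du r"
proof -
  have u_cont: "continuous_on {0..b} u" and du_cont: "continuous_on {0..<b} du"
    and u_pos: "\<forall>r\<in>{0..<b}. u r > 0" and "du 0 = 0"
    using sol unfolding positive_solution_def by auto
  obtain M where M: "\<forall>r\<in>{0..b}. \<bar>u r\<bar> \<le> M"
    using compact_imp_bounded[OF compact_continuous_image[OF u_cont compact_Icc]]
    by (metis bounded_real image_eqI)
  have "0 \<le> M" using M[rule_format, of 0] assms(4) by auto
  define K where "K = b ^ (N - 1) * (\<bar>lam\<bar> * M + M powr p)"
  have "0 \<le> K" unfolding K_def using \<open>0 \<le> M\<close> assms(4) by simp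
  have "- (K * b) \<le> r ^ (N - 1) * du r" if r: "r \<in> {0..<b}" for r
  proof -
    have "0 ^ (N - 1) * du 0 - K * (r - 0) \<le> r ^ (N - 1) * du r"
    proof (rule DERIV_lower_bound_by_slope[where f = "\<lambda>s. s ^ (N - 1) * du s"])
      show "continuous_on {0..r} (\<lambda>s. s ^ (N - 1) * du s)"
        using du_cont r by (auto intro!: continuous_intros elim: continuous_on_subset)
    next
      fix s assume s: "0 < s" "s < r"
      then show "((\<lambda>s. s ^ (N - 1) * du s) has_real_derivative
                   - (s ^ (N - 1) * (lam * u s + u s powr p))) (at s)"
        using positive_solution_flux_has_real_derivative[OF sol \<open>N \<ge> 1\<close>] r by simp
      have "0 \<le> u s" "u s \<le> M" "s ^ (N - 1) \<le> b ^ (N - 1)"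
        using s r u_pos M[rule_format, of s] by (auto simp: less_imp_le intro: power_mono)
      then have "lam * u s + u s powr p \<le> \<bar>lam\<bar> * M + M powr p"
        using assms(3) by (intro add_mono powr_mono2 order.trans[OF mult_right_mono mult_left_mono]) auto
      then have "s ^ (N - 1) * (lam * u s + u s powr p) \<le> s ^ (N - 1) * (\<bar>lam\<bar> * M + M powr p)"
        using s by (simp add: mult_left_mono)
      also have "\<dots> \<le> K"
        unfolding K_def using \<open>s ^ (N - 1) \<le> b ^ (N - 1)\<close> \<open>0 \<le> M\<close> by (simp add: mult_right_mono)
      finally show "- K \<le> - (s ^ (N - 1) * (lam * u s + u s powr p))" by simp
    qed (use r in simp)
    moreover have "K * r \<le> K * b" using r \<open>0 \<le> K\<close> by (simp add: mult_left_mono)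
    ultimately show ?thesis using \<open>du 0 = 0\<close> by simp
  qed
  moreover have "0 \<le> K * b" using \<open>0 \<le> K\<close> assms(4) by simp
  ultimately show ?thesis using that by blast
qed

definition radial_wronskian ::
  "nat \<Rightarrow> (real \<Rightarrow> real) \<Rightarrow> (real \<Rightarrow> real) \<Rightarrow> (real \<Rightarrow> real) \<Rightarrow> (real \<Rightarrow> real) \<Rightarrow> real \<Rightarrow> real"
where
  "radial_wronskian N u du phi dphi r = r ^ (N - 1) * (du r * phi r - u r * dphi r)"

lemma radial_wronskian_has_real_derivative:
  assumes sol: "positive_solution N p lam b u du ddu"
    and lin: "linear_solution N lam phi dphi ddphi"
    and "N \<ge> 1" and "0 < r" "r < b"
  shows "(radial_wronskian N u du phi dphi has_real_derivative
           - (r ^ (N - 1) * phi r * u r powr p)) (at r)"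
proof -
  have dd: "(dphi has_real_derivative ddphi r) (at r)"
    and ode: "ddphi r + (real N - 1) / r * dphi r + lam * phi r = 0"
    using lin \<open>0 < r\<close> unfolding linear_solution_def by auto
  have "ddphi r + (real N - 1) / r * dphi r = - (lam * phi r)"
    using ode by linarith
  then have flux_phi: "((\<lambda>s. s ^ (N - 1) * dphi s) has_real_derivative
                        - (r ^ (N - 1) * (lam * phi r))) (at r)"
    using radial_flux_has_real_derivative[OF \<open>N \<ge> 1\<close> \<open>0 < r\<close> dd] by (simp only: mult_minus_right)
  have "radial_wronskian N u du phi dphi =
          (\<lambda>s. (s ^ (N - 1) * du s) * phi s - (s ^ (N - 1) * dphi s) * u s)"
    by (auto simp: radial_wronskian_def fun_eq_iff algebra_simps)
  moreover have "((\<lambda>s. (s ^ (N - 1) * du s) * phi s - (s ^ (N - 1) * dphi s) * u s)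
      has_real_derivative - (r ^ (N - 1) * phi r * u r powr p)) (at r)"
    using DERIV_diff[OF
        DERIV_mult[OF positive_solution_flux_has_real_derivative[OF sol \<open>N \<ge> 1\<close> \<open>0 < r\<close> \<open>r < b\<close>]
                      linear_solution_DERIV[OF lin \<open>0 < r\<close>]]
        DERIV_mult[OF flux_phi positive_solution_DERIV[OF sol \<open>0 < r\<close> \<open>r < b\<close>]]]
    by (simp add: algebra_simps)
  ultimately show ?thesis by simp
qed

lemma radial_wronskian_continuous_on:
  assumes "positive_solution N p lam b u du ddu" and "linear_solution N lam phi dphi ddphi"
  shows "continuous_on {0..<b} (radial_wronskian N u du phi dphi)"
proof -
  have "continuous_on {0..b} u" "continuous_on {0..<b} du"
    using assms(1) unfolding positive_solution_def by auto
  moreover have "continuous_on {0..} phi" "continuous_on {0..} dphi"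
    using linear_solution_continuous_on[OF assms(2)] assms(2) unfolding linear_solution_def by auto
  ultimately have "continuous_on {0..<b} u" "continuous_on {0..<b} du"
    "continuous_on {0..<b} phi" "continuous_on {0..<b} dphi"
    by (auto elim!: continuous_on_subset)
  then show ?thesis
    unfolding radial_wronskian_def[abs_def] by (intro continuous_intros)
qed

lemma radial_wronskian_strict_decreasing:
  assumes sol: "positive_solution N p lam b u du ddu"
    and lin: "linear_solution N lam phi dphi ddphi"
    and "N \<ge> 1" and "c \<le> b" and phi_pos: "\<forall>r\<in>{0..<c}. phi r > 0"
    and "0 \<le> s" "s < t" "t < c"
  shows "radial_wronskian N u du phi dphi t < radial_wronskian N u du phi dphi s"
proof (rule DERIV_neg_imp_decreasing_open[where f = "radial_wronskian N u du phi dphi"])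
  fix r assume "s < r" "r < t"
  then have "0 < r" "r < b" "phi r > 0" "u r > 0"
    using assms sol unfolding positive_solution_def by auto
  then show "\<exists>y. (radial_wronskian N u du phi dphi has_real_derivative y) (at r) \<and> y < 0"
    using radial_wronskian_has_real_derivative[OF sol lin \<open>N \<ge> 1\<close>] by fastforce
next
  show "continuous_on {s..t} (radial_wronskian N u du phi dphi)"
    using radial_wronskian_continuous_on[OF sol lin] assms(4,6-8)
    by (elim continuous_on_subset) auto
qed (fact \<open>s < t\<close>)

lemma radial_wronskian_lower_bound_at_first_zero:
  assumes sol: "positive_solution N p lam b u du ddu"
    and lin: "linear_solution N lam phi dphi ddphi"
    and "N \<ge> 1" and "0 \<le> p" and "0 < c" "c \<le> b"
    and "phi c \<le> 0" and phi_pos: "\<forall>r\<in>{0..<c}. phi r > 0"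
  obtains h where "continuous_on {0..c} h" and "0 \<le> h c"
    and "\<forall>r\<in>{0..<c}. h r \<le> radial_wronskian N u du phi dphi r"
proof -
  obtain B where "B \<ge> 0" and flux: "\<forall>r\<in>{0..<b}. - B \<le> r ^ (N - 1) * du r"
    using positive_solution_flux_bounded_below[OF sol \<open>N \<ge> 1\<close> \<open>0 \<le> p\<close>] assms(5,6) by auto
  define h where "h = (\<lambda>r. - B * phi r - r ^ (N - 1) * u r * dphi r)"
  have "continuous_on {0..b} u"
    using sol unfolding positive_solution_def by auto
  moreover have "continuous_on {0..} phi" "continuous_on {0..} dphi"
    using linear_solution_continuous_on[OF lin] lin unfolding linear_solution_def by auto
  ultimately have "continuous_on {0..c} u" "continuous_on {0..c} phi" "continuous_on {0..c} dphi"
    using \<open>c \<le> b\<close> by (auto elim!: continuous_on_subset)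
  then have "continuous_on {0..c} h"
    unfolding h_def by (intro continuous_intros)
  moreover have "0 \<le> h c"
  proof -
    have "dphi c \<le> 0"
      using DERIV_nonpos_at_left_crossing[OF linear_solution_DERIV[OF lin \<open>0 < c\<close>] \<open>phi c \<le> 0\<close> \<open>0 < c\<close>]
        phi_pos by auto
    moreover have "0 \<le> u c"
      using sol \<open>0 < c\<close> \<open>c \<le> b\<close> unfolding positive_solution_def
      by (cases "c = b") (auto simp: less_imp_le)
    ultimately have "c ^ (N - 1) * u c * dphi c \<le> 0"
      using \<open>0 < c\<close> by (intro mult_nonneg_nonpos) auto
    moreover have "0 \<le> - B * phi c"
      using \<open>B \<ge> 0\<close> \<open>phi c \<le> 0\<close> by (intro mult_nonpos_nonpos) auto
    ultimately show ?thesis unfolding h_def by linarith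
  qed
  moreover have "h r \<le> radial_wronskian N u du phi dphi r" if r: "r \<in> {0..<c}" for r
  proof -
    have "0 < phi r" using phi_pos r by blast
    then have "- B * phi r \<le> (r ^ (N - 1) * du r) * phi r"
      using flux r \<open>c \<le> b\<close> by (intro mult_right_mono) auto
    then show ?thesis unfolding h_def radial_wronskian_def by (simp add: algebra_simps)
  qed
  ultimately show ?thesis using that by blast
qed

lemma linear_solution_no_first_zero:
  assumes sol: "positive_solution N p lam b u du ddu"
    and lin: "linear_solution N lam phi dphi ddphi"
    and "N \<ge> 1" and "0 \<le> p"
    and first_zero: "0 < c" "c \<le> b" "phi c \<le> 0" "\<forall>r\<in>{0..<c}. phi r > 0"
  shows False
proof -
  obtain h where h_cont: "continuous_on {0..c} h" and "0 \<le> h c"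
    and h_le: "\<forall>r\<in>{0..<c}. h r \<le> radial_wronskian N u du phi dphi r"
    using radial_wronskian_lower_bound_at_first_zero[OF sol lin assms(3,4) first_zero] by blast
  let ?W = "radial_wronskian N u du phi dphi"
  have W_dec: "?W t < ?W s" if "0 \<le> s" "s < t" "t < c" for s t
    using radial_wronskian_strict_decreasing[OF sol lin \<open>N \<ge> 1\<close> first_zero(2,4) that] .
  have "?W 0 = 0"
    using sol lin unfolding radial_wronskian_def positive_solution_def linear_solution_def by simp
  then have "?W (c/2) < 0" using W_dec[of 0 "c/2"] \<open>0 < c\<close> by simp
  have "\<forall>\<^sub>F r in at_left c. r \<in> {c/2<..<c}"
    using \<open>0 < c\<close> by (intro eventually_at_left_real) simp
  then have "\<forall>\<^sub>F r in at_left c. h r \<le> ?W (c/2)"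
  proof (rule eventually_mono)
    fix r assume r: "r \<in> {c/2<..<c}"
    then have "h r \<le> ?W r" using h_le \<open>0 < c\<close> by simp
    also have "?W r < ?W (c/2)" using W_dec[of "c/2" r] r \<open>0 < c\<close> by simp
    finally show "h r \<le> ?W (c/2)" by simp
  qed
  with continuous_on_Icc_at_leftD[OF h_cont \<open>0 < c\<close>] have "h c \<le> ?W (c/2)"
    by (rule tendsto_upperbound) simp
  with \<open>0 \<le> h c\<close> \<open>?W (c/2) < 0\<close> show False by linarith
qed

theorem lemma2p1:
  fixes N :: nat and p b lam :: real
    and u du ddu phi dphi ddphi :: "real \<Rightarrow> real"
  assumes "N \<ge> 3"
    and "p > (real N + 2) / (real N - 2)"
    and "b > 0" and "lam > 0"
    and "positive_solution N p lam b u du ddu"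
    and "linear_solution N lam phi dphi ddphi"
  shows "\<forall>r\<in>{0..b}. phi r > 0"
proof (rule ccontr)
  assume "\<not> (\<forall>r\<in>{0..b}. phi r > 0)"
  then obtain x where "x \<in> {0..b}" "phi x \<le> 0" by auto
  moreover have "continuous_on {0..b} phi"
    using linear_solution_continuous_on[OF assms(6)] by (rule continuous_on_subset) auto
  moreover have "phi 0 > 0" using assms(6) unfolding linear_solution_def by simp
  ultimately obtain c where first_zero: "0 < c" "c \<le> b" "phi c \<le> 0" "\<forall>r\<in>{0..<c}. phi r > 0"
    using continuous_on_first_nonpos by metis
  have "N \<ge> 1" using assms(1) by simp
  have "0 < (real N + 2) / (real N - 2)" using assms(1) by simp
  then have "0 \<le> p" using assms(2) by linarith
  show False
    using linear_solution_no_first_zero[OF assms(5,6) \<open>N \<ge> 1\<close> \<open>0 \<le> p\<close> first_zero] .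
qed

end
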